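(* Let $M$ be a path-connected pre-$\Delta$-monoid with identity $e$. If $M$ does not have well-defined infinite $\pi_1$-products at $e$, then $M$ does not have well-defined infinite $\pi_1$-products at any of its points.
   Context: A pre-$\Delta$-monoid is a space $M$ with an associative operation $\ast$ with identity $e$ such that for any continuous paths $\alpha,\beta:[0,1]\to M$, the pointwise product $t\mapsto\alpha(t)\ast\beta(t)$ is continuous. A sequence of loops $\alpha_n\in\Omega(X,x)$ is a null-sequence if every neighborhood of $x$ contains $\mathrm{Im}(\alpha_n)$ for all but finitely many $n$; its infinite concatenation $\prod_{n=1}^\infty\alpha_n$ is the loop equal to (a linear reparametrization of) $\alpha_n$ on $[\frac{n-1}{n},\frac{n}{n+1}]$ and sending $1$ to $x$. $X$ has well-defined infinite $\pi_1$-products at $x$ if for all null-sequences $\alpha_n,\beta_n\in\Omega(X,x)$ with $\alpha_n\simeq\beta_n$ (path-homotopic) for every $n$, we have $\prod_{n=1}^\infty\alpha_n\simeq\prod_{n=1}^\infty\beta_n$. *)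

theory Defs
  imports "HOL-Analysis.Analysis"
begin

text \<open>The space M is the topological space given by a type 'a (carrier UNIV).
  Paths are maps real \<Rightarrow> 'a continuous on [0,1] (library notion path).\<close>

definition pre_delta_monoid :: "('a::topological_space \<Rightarrow> 'a \<Rightarrow> 'a) \<Rightarrow> 'a \<Rightarrow> bool" where
  "pre_delta_monoid prd e \<longleftrightarrow>
     (\<forall>a b c. prd (prd a b) c = prd a (prd b c)) \<and>
     (\<forall>a. prd e a = a \<and> prd a e = a) \<and>
     (\<forall>\<alpha> \<beta>. path \<alpha> \<and> path \<beta> \<longrightarrow> path (\<lambda>t. prd (\<alpha> t) (\<beta> t)))"

definition loop_at :: "'a::topological_space \<Rightarrow> (real \<Rightarrow> 'a) \<Rightarrow> bool" where
  "loop_at x \<alpha> \<longleftrightarrow> path \<alpha> \<and> pathstart \<alpha> = x \<and> pathfinish \<alpha> = x"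

text \<open>Sequences are indexed by n \<ge> 1; the value at index 0 is ignored.\<close>
definition null_sequence :: "'a::topological_space \<Rightarrow> (nat \<Rightarrow> real \<Rightarrow> 'a) \<Rightarrow> bool" where
  "null_sequence x \<alpha> \<longleftrightarrow>
     (\<forall>n\<ge>1. loop_at x (\<alpha> n)) \<and>
     (\<forall>U. open U \<and> x \<in> U \<longrightarrow> (\<forall>\<^sub>F n in sequentially. path_image (\<alpha> n) \<subseteq> U))"

text \<open>Infinite concatenation: on [(n-1)/n, n/(n+1)] it is \<alpha> n linearly reparametrized;
  for t in [0,1) the index is n = floor(1/(1-t)), i.e. the n with (n-1)/n \<le> t < n/(n+1);
  the length of that interval is 1/(n(n+1)). The point 1 is sent to x.\<close>
definition inf_concat :: "'a \<Rightarrow> (nat \<Rightarrow> real \<Rightarrow> 'a) \<Rightarrow> real \<Rightarrow> 'a" where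
  "inf_concat x \<alpha> t =
     (if t \<ge> 1 then x
      else (let n = nat \<lfloor>1 / (1 - t)\<rfloor>
            in \<alpha> n ((t - (real n - 1) / real n) * (real n * (real n + 1)))))"

definition wd_inf_pi1_products :: "'a::topological_space \<Rightarrow> bool" where
  "wd_inf_pi1_products x \<longleftrightarrow>
     (\<forall>\<alpha> \<beta>. null_sequence x \<alpha> \<and> null_sequence x \<beta> \<and>
             (\<forall>n\<ge>1. homotopic_paths UNIV (\<alpha> n) (\<beta> n))
         \<longrightarrow> homotopic_paths UNIV (inf_concat x \<alpha>) (inf_concat x \<beta>))"

end

theory Submission
  imports Defs
begin

text \<open>
  Pick a path \<open>\<gamma>\<close> from \<open>e\<close> to \<open>x\<close>. Right multiplication by \<open>x\<close> sends null-sequences of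
  loops at \<open>e\<close> to null-sequences at \<open>x\<close>, preserves homotopy of paths, and commutes with
  infinite concatenation. For a loop \<open>A\<close> at \<open>e\<close> the map \<open>(a, b) \<mapsto> A a * \<gamma> b\<close> on the unit
  square, continuous by the pre-\<open>\<Delta>\<close> property, shows \<open>A \<simeq> \<gamma> \<cdot> (A * x) \<cdot> \<gamma>\<^sup>-\<^sup>1\<close>. Hence a
  counterexample \<open>\<alpha>\<^sub>n \<simeq> \<beta>\<^sub>n\<close> at \<open>e\<close> with \<open>\<Pi>\<alpha>\<^sub>n \<not>\<simeq> \<Pi>\<beta>\<^sub>n\<close> yields the counterexample
  \<open>\<alpha>\<^sub>n * x \<simeq> \<beta>\<^sub>n * x\<close> at \<open>x\<close>.
\<close>

text \<open>\<open>inf_concat x \<alpha>\<close> traverses \<open>\<alpha> n\<close> while the time runs from \<open>inf_concat_time n 0\<close>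
  to \<open>inf_concat_time n 1 = inf_concat_time (Suc n) 0\<close>.\<close>

definition inf_concat_time :: "nat \<Rightarrow> real \<Rightarrow> real" where
  "inf_concat_time n t = (real n - 1) / real n + t / (real n * (real n + 1))"

lemma one_minus_inf_concat_time:
  assumes "n \<ge> 1"
  shows "1 - inf_concat_time n t = (real n + 1 - t) / (real n * (real n + 1))"
proof -
  have "real n > 0"
    using assms by simp
  then show ?thesis
    by (simp add: inf_concat_time_def divide_simps) (simp add: algebra_simps)
qed

lemma inf_concat_time_Suc:
  assumes "n \<ge> 1"
  shows "inf_concat_time n 1 = inf_concat_time (Suc n) 0"
proof -
  have "real n > 0"
    using assms by simp
  then show ?thesis
    by (simp add: inf_concat_time_def divide_simps) (simp add: algebra_simps)
qed

lemma inf_concat_time_before_end: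
  assumes "n \<ge> 1" and "t < 1"
  shows "1 / (real n + 1) < 1 - inf_concat_time n t"
  using assms by (simp add: one_minus_inf_concat_time divide_simps)

lemma inf_concat_time_near_end:
  assumes "n \<ge> 1" and "0 \<le> t"
  shows "1 - inf_concat_time n t \<le> 1 / real n"
  using assms by (simp add: one_minus_inf_concat_time divide_simps)

lemma inf_concat_time_in_unit:
  assumes "n \<ge> 1" and "0 \<le> t" and "t \<le> 1"
  shows "0 \<le> inf_concat_time n t" and "inf_concat_time n t < 1"
proof -
  have "real n + 1 - t > 0"
    using assms by simp
  then have "1 - inf_concat_time n t > 0"
    using assms by (simp add: one_minus_inf_concat_time)
  then show "inf_concat_time n t < 1"
    by simp
  show "0 \<le> inf_concat_time n t"
    using assms by (simp add: inf_concat_time_def)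
qed

lemma inf_concat_at_time:
  assumes n: "n \<ge> 1" and t: "0 \<le> t" "t < 1"
  shows "inf_concat x \<alpha> (inf_concat_time n t) = \<alpha> n t"
proof -
  let ?s = "inf_concat_time n t"
  have "real n \<le> 1 / (1 - ?s)" "1 / (1 - ?s) < real n + 1"
    using n t by (simp_all add: one_minus_inf_concat_time divide_simps)
  then have "nat \<lfloor>1 / (1 - ?s)\<rfloor> = n"
    by linarith
  moreover have "?s < 1"
    using inf_concat_time_in_unit[OF n t(1)] t(2) by simp
  moreover have "(?s - (real n - 1) / real n) * (real n * (real n + 1)) = t"
    using n by (simp add: inf_concat_time_def)
  ultimately show ?thesis
    by (simp add: inf_concat_def Let_def)
qed

lemma inf_concat_time_surj:
  assumes "0 \<le> y" and "y < 1"
  obtains n t where "n \<ge> 1" "0 \<le> t" "t < 1" "y = inf_concat_time n t"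
proof -
  define n where "n = nat \<lfloor>1 / (1 - y)\<rfloor>"
  define t where "t = (y - (real n - 1) / real n) * (real n * (real n + 1))"
  have "1 \<le> 1 / (1 - y)"
    using assms by (simp add: divide_simps)
  then have n: "n \<ge> 1" and n_le: "real n \<le> 1 / (1 - y)" and n_gt: "1 / (1 - y) < real n + 1"
    unfolding n_def by linarith+
  have y: "y = inf_concat_time n t"
    using n by (simp add: t_def inf_concat_time_def)
  define d where "d = real n + 1 - t"
  have one_minus_y: "1 - y = d / (real n * (real n + 1))"
    using one_minus_inf_concat_time[OF n, of t] y by (simp add: d_def)
  have "d / (real n * (real n + 1)) > 0"
    using assms by (simp flip: one_minus_y)
  moreover have "real n * (real n + 1) > 0"
    using n by simp
  ultimately have d: "d > 0"
    by (simp add: zero_less_divide_iff)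
  have "real n * d \<le> real n * (real n + 1)"
    using n_le d n by (simp add: one_minus_y le_divide_eq)
  then have "0 \<le> t"
    using n by (simp add: d_def algebra_simps zero_le_mult_iff)
  have "real n * (real n + 1) < (real n + 1) * d"
    using n_gt d n by (simp add: one_minus_y divide_less_eq)
  then have "t * (real n + 1) < 1 * (real n + 1)"
    by (simp add: d_def algebra_simps)
  then have "t < 1"
    by (simp only: mult_less_cancel_right)
  with n y \<open>0 \<le> t\<close> that show ?thesis
    by blast
qed

lemma inf_concat_at_time_closed:
  assumes n: "n \<ge> 1" and t: "0 \<le> t" "t \<le> 1" and consecutive: "\<alpha> n 1 = \<alpha> (Suc n) 0"
  shows "inf_concat x \<alpha> (inf_concat_time n t) = \<alpha> n t"
proof (cases "t < 1")
  case True
  then show ?thesis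
    by (rule inf_concat_at_time[OF n t(1)])
next
  case False
  then have "t = 1"
    using t by simp
  moreover have "inf_concat x \<alpha> (inf_concat_time (Suc n) 0) = \<alpha> (Suc n) 0"
    by (rule inf_concat_at_time) simp_all
  ultimately show ?thesis
    using inf_concat_time_Suc[OF n] consecutive by simp
qed

lemma inf_concat_time_le_iff:
  assumes "n \<ge> 1"
  shows "inf_concat_time n s \<le> inf_concat_time n t \<longleftrightarrow> s \<le> t"
proof -
  have "real n * (real n + 1) > 0"
    using assms by simp
  then show ?thesis
    by (simp add: inf_concat_time_def divide_le_cancel)
qed

lemma inf_concat_time_inverse:
  assumes "n \<ge> 1"
  shows "inf_concat_time n ((s - inf_concat_time n 0) * (real n * (real n + 1))) = s"
  using assms by (simp add: inf_concat_time_def)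

lemma continuous_on_inf_concat_segment:
  assumes n: "n \<ge> 1" and "path (\<alpha> n)" and consecutive: "\<alpha> n 1 = \<alpha> (Suc n) 0"
  shows "continuous_on {inf_concat_time n 0 .. inf_concat_time n 1} (inf_concat x \<alpha>)"
proof -
  define \<sigma> where "\<sigma> s = (s - inf_concat_time n 0) * (real n * (real n + 1))" for s
  have \<sigma>: "inf_concat_time n (\<sigma> s) = s" for s
    unfolding \<sigma>_def by (rule inf_concat_time_inverse[OF n])
  have \<sigma>_01: "\<sigma> s \<in> {0..1}" if "s \<in> {inf_concat_time n 0 .. inf_concat_time n 1}" for s
    using that inf_concat_time_le_iff[OF n] by (metis \<sigma> atLeastAtMost_iff)
  have "continuous_on {inf_concat_time n 0 .. inf_concat_time n 1} (\<alpha> n \<circ> \<sigma>)"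
    using \<open>path (\<alpha> n)\<close> \<sigma>_01 unfolding path_def \<sigma>_def
    by (intro continuous_on_compose continuous_intros) (auto elim: continuous_on_subset)
  moreover have "(\<alpha> n \<circ> \<sigma>) s = inf_concat x \<alpha> s"
    if "s \<in> {inf_concat_time n 0 .. inf_concat_time n 1}" for s
    using inf_concat_at_time_closed[OF n _ _ consecutive, of "\<sigma> s" x] \<sigma>_01[OF that] \<sigma> by simp
  ultimately show ?thesis
    using continuous_on_eq by blast
qed

lemma continuous_on_inf_concat_initial:
  assumes paths: "\<And>n. n \<ge> 1 \<Longrightarrow> path (\<alpha> n)"
    and consecutive: "\<And>n. n \<ge> 1 \<Longrightarrow> \<alpha> n 1 = \<alpha> (Suc n) 0"
    and "N \<ge> 1"
  shows "continuous_on {0 .. inf_concat_time N 1} (inf_concat x \<alpha>)"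
  using \<open>N \<ge> 1\<close>
proof (induction N rule: nat_induct_at_least)
  case base
  then show ?case
    using continuous_on_inf_concat_segment[of 1 \<alpha> x] paths consecutive
    by (simp add: inf_concat_time_def)
next
  case (Suc N)
  have "0 \<le> inf_concat_time (Suc N) 0" "inf_concat_time (Suc N) 0 \<le> inf_concat_time (Suc N) 1"
    by (simp_all add: inf_concat_time_def)
  then have "{0 .. inf_concat_time (Suc N) 1}
      = {0 .. inf_concat_time N 1} \<union> {inf_concat_time (Suc N) 0 .. inf_concat_time (Suc N) 1}"
    using inf_concat_time_Suc[OF Suc.hyps] by auto
  then show ?case
    using continuous_on_inf_concat_segment[of "Suc N" \<alpha> x] paths consecutive Suc
    by (simp add: continuous_on_closed_Un)
qed

lemma continuous_inf_concat_at_end: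
  assumes shrinking: "\<And>U. open U \<Longrightarrow> x \<in> U \<Longrightarrow> \<forall>\<^sub>F n in sequentially. path_image (\<alpha> n) \<subseteq> U"
  shows "continuous (at 1 within {0..1}) (inf_concat x \<alpha>)"
  unfolding continuous_within
proof (rule topological_tendstoI)
  fix B assume B: "open B" "inf_concat x \<alpha> 1 \<in> B"
  then have "x \<in> B"
    by (simp add: inf_concat_def)
  then obtain N where N: "\<And>n. n \<ge> N \<Longrightarrow> path_image (\<alpha> n) \<subseteq> B"
    using shrinking[OF B(1)] unfolding eventually_sequentially by blast
  have "inf_concat x \<alpha> y \<in> B" if y: "y \<in> {0..1}" "y \<noteq> 1" "dist y 1 < 1 / (real N + 1)" for y
  proof -
    obtain n t where nt: "n \<ge> 1" "0 \<le> t" "t < 1" "y = inf_concat_time n t"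
      using inf_concat_time_surj[of y] y by (metis atLeastAtMost_iff order_less_le)
    have "1 / (real n + 1) < 1 / (real N + 1)"
      using inf_concat_time_before_end[OF nt(1,3)] nt(4) y by (simp add: dist_real_def)
    then have "n \<ge> N"
      by (simp add: divide_simps)
    moreover have "\<alpha> n t \<in> path_image (\<alpha> n)"
      using nt by (simp add: path_image_def)
    moreover have "inf_concat x \<alpha> y = \<alpha> n t"
      unfolding nt(4) by (rule inf_concat_at_time[OF nt(1-3)])
    ultimately show ?thesis
      using N by auto
  qed
  then show "\<forall>\<^sub>F y in at 1 within {0..1}. inf_concat x \<alpha> y \<in> B"
    unfolding eventually_at by (intro exI[of _ "1 / (real N + 1)"]) simp
qed

lemma path_inf_concat:
  assumes paths: "\<And>n. n \<ge> 1 \<Longrightarrow> path (\<alpha> n)"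
    and consecutive: "\<And>n. n \<ge> 1 \<Longrightarrow> \<alpha> n 1 = \<alpha> (Suc n) 0"
    and shrinking: "\<And>U. open U \<Longrightarrow> x \<in> U \<Longrightarrow> \<forall>\<^sub>F n in sequentially. path_image (\<alpha> n) \<subseteq> U"
  shows "path (inf_concat x \<alpha>)"
  unfolding path_def continuous_on_eq_continuous_within
proof
  fix y :: real assume y: "y \<in> {0..1}"
  show "continuous (at y within {0..1}) (inf_concat x \<alpha>)"
  proof (cases "y = 1")
    case True
    then show ?thesis
      using continuous_inf_concat_at_end[OF shrinking] by simp
  next
    case False
    then obtain N t where N: "N \<ge> 1" "0 \<le> t" "t < 1" "y = inf_concat_time N t"
      using inf_concat_time_surj[of y] y by (metis atLeastAtMost_iff order_less_le)
    then have y_N: "y < inf_concat_time N 1" "inf_concat_time N 1 < 1"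
      using inf_concat_time_le_iff[OF N(1), of 1 t] inf_concat_time_in_unit[OF N(1), of 1] by auto
    have "at y within {0..1} = at y within {0 .. inf_concat_time N 1}"
      by (rule at_within_nhd[of _ "{..< inf_concat_time N 1}"]) (use y y_N in auto)
    then show ?thesis
      using continuous_on_inf_concat_initial[of \<alpha> N x] paths consecutive N(1) y y_N
      by (simp add: continuous_on_eq_continuous_within)
  qed
qed

lemma loop_at_inf_concat:
  assumes "null_sequence x \<alpha>"
  shows "loop_at x (inf_concat x \<alpha>)"
proof -
  have loops: "\<And>n. n \<ge> 1 \<Longrightarrow> loop_at x (\<alpha> n)"
    using assms by (simp add: null_sequence_def)
  then have "path (inf_concat x \<alpha>)"
    using assms by (intro path_inf_concat) (auto simp: null_sequence_def loop_at_def pathstart_def pathfinish_def)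
  moreover have "inf_concat x \<alpha> 0 = \<alpha> 1 0"
    using inf_concat_at_time[of 1 0 x \<alpha>] by (simp add: inf_concat_time_def)
  ultimately show ?thesis
    using loops[of 1] by (simp add: loop_at_def pathstart_def pathfinish_def inf_concat_def)
qed

lemma inf_concat_comp:
  assumes "f e = x"
  shows "inf_concat x (\<lambda>n t. f (\<alpha> n t)) = (\<lambda>t. f (inf_concat e \<alpha> t))"
  using assms by (simp add: fun_eq_iff inf_concat_def Let_def)

lemma null_sequence_comp:
  assumes null: "null_sequence e \<alpha>"
    and path_comp: "path (\<lambda>t. f (inf_concat e \<alpha> t))"
    and paths: "\<And>n. n \<ge> 1 \<Longrightarrow> path (\<lambda>t. f (\<alpha> n t))"
    and "f e = x"
  shows "null_sequence x (\<lambda>n t. f (\<alpha> n t))"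
  unfolding null_sequence_def
proof (intro conjI allI impI)
  have loops: "\<And>n. n \<ge> 1 \<Longrightarrow> loop_at e (\<alpha> n)"
    using null by (simp add: null_sequence_def)
  then show "loop_at x (\<lambda>t. f (\<alpha> n t))" if "n \<ge> 1" for n
    using paths[OF that] \<open>f e = x\<close> that by (simp add: loop_at_def pathstart_def pathfinish_def)
  fix U assume "open U \<and> x \<in> U"
  then have U: "open U" "x \<in> U"
    by auto
  have "((\<lambda>t. f (inf_concat e \<alpha> t)) \<longlongrightarrow> f (inf_concat e \<alpha> 1)) (at 1 within {0..1})"
    using path_comp unfolding path_def continuous_on_def by simp
  then have "((\<lambda>t. f (inf_concat e \<alpha> t)) \<longlongrightarrow> x) (at 1 within {0..1})"
    using \<open>f e = x\<close> by (simp add: inf_concat_def)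
  from topological_tendstoD[OF this U] obtain d where d: "d > 0"
    and near_end: "\<And>y. y \<in> {0..1} \<Longrightarrow> y \<noteq> 1 \<Longrightarrow> dist y 1 < d \<Longrightarrow> f (inf_concat e \<alpha> y) \<in> U"
    unfolding eventually_at by blast
  obtain N :: nat where N: "N \<ge> 1" "1 / real N < d"
    using ex_inverse_of_nat_less[OF d] by (auto simp: inverse_eq_divide Suc_le_eq)
  have "path_image (\<lambda>t. f (\<alpha> n t)) \<subseteq> U" if "n \<ge> N" for n
  proof
    fix z assume "z \<in> path_image (\<lambda>t. f (\<alpha> n t))"
    then obtain t where t: "0 \<le> t" "t \<le> 1" and z: "z = f (\<alpha> n t)"
      by (auto simp: path_image_def)
    have n: "n \<ge> 1"
      using N that by simp
    let ?y = "inf_concat_time n t"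
    have "\<alpha> n 1 = \<alpha> (Suc n) 0"
      using loops[OF n] loops[of "Suc n"] n by (simp add: loop_at_def pathstart_def pathfinish_def)
    then have y: "inf_concat e \<alpha> ?y = \<alpha> n t"
      by (rule inf_concat_at_time_closed[OF n t])
    have y_01: "0 \<le> ?y" "?y < 1"
      using inf_concat_time_in_unit[OF n t] by simp_all
    have "1 / real n \<le> 1 / real N"
      using N that by (simp add: frac_le)
    then have "dist ?y 1 < d"
      using inf_concat_time_near_end[OF n t(1)] N y_01 by (simp add: dist_real_def)
    then show "z \<in> U"
      using near_end[of ?y] y y_01 z by simp
  qed
  then show "\<forall>\<^sub>F n in sequentially. path_image (\<lambda>t. f (\<alpha> n t)) \<subseteq> U"
    unfolding eventually_sequentially by blast
qed

lemma path_through_convergent_sequence: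
  fixes u :: "nat \<Rightarrow> 'a::real_normed_vector"
  assumes "convex S" and u: "\<forall>n. u n \<in> S" and a: "a \<in> S" and lim: "u \<longlonglongrightarrow> a"
  obtains p where "path p" "path_image p \<subseteq> S" "p 1 = a" "\<And>k. p (inf_concat_time (Suc k) 0) = u k"
proof
  define \<beta> where "\<beta> n = linepath (u (n - 1)) (u n)" for n
  define p where "p = inf_concat a \<beta>"
  show "path p"
    unfolding p_def
  proof (rule path_inf_concat)
    show "path (\<beta> n)" "\<beta> n 1 = \<beta> (Suc n) 0" for n
      by (simp_all add: \<beta>_def) (simp add: linepath_def)
  next
    fix U assume U: "open U" "a \<in> U"
    obtain r where r: "r > 0" "ball a r \<subseteq> U"
      using U open_contains_ball by blast
    have "\<forall>\<^sub>F n in sequentially. u n \<in> ball a r"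
      using lim r(1) unfolding tendsto_iff by (simp add: dist_commute)
    then obtain N where N: "\<And>n. n \<ge> N \<Longrightarrow> u n \<in> ball a r"
      unfolding eventually_sequentially by blast
    have "path_image (\<beta> n) \<subseteq> U" if "n \<ge> Suc N" for n
      using closed_segment_subset[of "u (n - 1)" "ball a r" "u n"] N[of n] N[of "n - 1"] that r
      by (simp add: \<beta>_def)
    then show "\<forall>\<^sub>F n in sequentially. path_image (\<beta> n) \<subseteq> U"
      unfolding eventually_sequentially by blast
  qed
  have "p y \<in> S" if y: "y \<in> {0..1}" for y
  proof (cases "y < 1")
    case False
    then show ?thesis
      using a y by (simp add: p_def inf_concat_def)
  next
    case True
    then obtain n t where nt: "n \<ge> 1" "0 \<le> t" "t < 1" "y = inf_concat_time n t"
      using inf_concat_time_surj[of y] y by auto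
    have "p y = \<beta> n t"
      unfolding p_def nt(4) by (rule inf_concat_at_time[OF nt(1-3)])
    moreover have "\<beta> n t \<in> closed_segment (u (n - 1)) (u n)"
      using nt(2,3) path_image_linepath[of "u (n - 1)" "u n"]
      unfolding \<beta>_def path_image_def by auto
    ultimately show ?thesis
      using closed_segment_subset[of "u (n - 1)" S "u n"] u \<open>convex S\<close> by auto
  qed
  then show "path_image p \<subseteq> S"
    by (auto simp: path_image_def)
  show "p 1 = a"
    by (simp add: p_def inf_concat_def)
  show "p (inf_concat_time (Suc k) 0) = u k" for k
    using inf_concat_at_time[of "Suc k" 0 a \<beta>] by (simp add: p_def \<beta>_def linepath_def)
qed

text \<open>Sequential continuity suffices, and a convergent sequence together with its limit lies
  on a single path, along which the product is continuous by assumption.\<close>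

lemma pre_delta_monoid_continuous_on:
  fixes f g :: "'b::real_normed_vector \<Rightarrow> 'a::topological_space"
  assumes pd: "pre_delta_monoid prd e" and "convex S"
    and f: "continuous_on S f" and g: "continuous_on S g"
  shows "continuous_on S (\<lambda>z. prd (f z) (g z))"
proof (rule continuous_on_sequentiallyI)
  fix u a assume "\<forall>n. u n \<in> S" and "a \<in> S" and "u \<longlonglongrightarrow> a"
  then obtain p where p: "path p" "path_image p \<subseteq> S" "p 1 = a"
    and p_times: "\<And>k. p (inf_concat_time (Suc k) 0) = u k"
    using path_through_convergent_sequence[OF \<open>convex S\<close>] by blast
  have "path (\<lambda>t. f (p t))" "path (\<lambda>t. g (p t))"
    using p unfolding path_def path_image_def
    by (auto intro: continuous_on_compose2[OF f] continuous_on_compose2[OF g])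
  then have product: "continuous_on {0..1} (\<lambda>t. prd (f (p t)) (g (p t)))"
    using pd unfolding pre_delta_monoid_def path_def by blast
  have lim_times: "(\<lambda>k. inf_concat_time (Suc k) 0) \<longlonglongrightarrow> 1"
    using LIMSEQ_inverse_real_of_nat_add_minus[of 1]
    by (simp add: inf_concat_time_def divide_simps)
  have times_01: "\<forall>\<^sub>F k in sequentially. inf_concat_time (Suc k) 0 \<in> {0..1}"
    by (simp add: inf_concat_time_def)
  have "(\<lambda>k. prd (f (p (inf_concat_time (Suc k) 0))) (g (p (inf_concat_time (Suc k) 0))))
      \<longlonglongrightarrow> prd (f (p 1)) (g (p 1))"
    using continuous_on_tendsto_compose[OF product lim_times _ times_01] by simp
  then show "(\<lambda>n. prd (f (u n)) (g (u n))) \<longlonglongrightarrow> prd (f a) (g a)"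
    by (simp add: p_times p(3))
qed

lemma convex_square: "convex ({0..1::real} \<times> {0..1::real})"
  by (intro convex_Times convex_real_interval)

lemma path_mult_right:
  assumes "pre_delta_monoid prd e" and "path p"
  shows "path (\<lambda>t. prd (p t) c)"
  using assms continuous_on_const[of "{0..1}" c] unfolding pre_delta_monoid_def path_def by blast

lemma homotopic_paths_mult_right:
  assumes pd: "pre_delta_monoid prd e" and h: "homotopic_paths UNIV p q"
  shows "homotopic_paths UNIV (\<lambda>t. prd (p t) c) (\<lambda>t. prd (q t) c)"
proof -
  obtain h where h: "continuous_on ({0..1} \<times> {0..1}) h"
      "\<forall>x \<in> {0..1}. h(0,x) = p x" "\<forall>x \<in> {0..1}. h(1,x) = q x"
      "\<forall>t \<in> {0..1::real}. pathstart(h \<circ> Pair t) = pathstart p \<and> pathfinish(h \<circ> Pair t) = pathfinish p"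
    using h unfolding homotopic_paths by blast
  have c: "continuous_on ({0..1} \<times> {0..1}) (\<lambda>z. prd (h z) c)"
    by (rule pre_delta_monoid_continuous_on[OF pd convex_square h(1) continuous_on_const])
  show ?thesis unfolding homotopic_paths
    by (rule exI[of _ "\<lambda>z. prd (h z) c"]) (use c h in \<open>auto simp: pathstart_def pathfinish_def\<close>)
qed

text \<open>Both sides are images under \<open>(a, b) \<mapsto> A a * \<gamma> b\<close> of paths in the unit square: the
  bottom edge, and the path along the other three edges.\<close>

lemma homotopic_paths_conjugate_mult_right:
  assumes pd: "pre_delta_monoid prd e" and A: "loop_at e A"
    and \<gamma>: "path \<gamma>" "pathstart \<gamma> = e" "pathfinish \<gamma> = x"
  shows "homotopic_paths UNIV A (\<gamma> +++ ((\<lambda>t. prd (A t) x) +++ reversepath \<gamma>))"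
proof -
  let ?S = "{0..1::real} \<times> {0..1::real}"
  define P where "P z = prd (A (fst z)) (\<gamma> (snd z))" for z
  define edges where "edges = linepath (0, 0) (0, 1) +++ (linepath (0, 1) (1, 1) +++ linepath (1, 1) (1::real, 0::real))"
  have ide: "prd e a = a" "prd a e = a" for a
    using pd by (simp_all add: pre_delta_monoid_def)
  have ends: "A 0 = e" "A 1 = e" "\<gamma> 0 = e" "\<gamma> 1 = x"
    using A \<gamma> by (simp_all add: loop_at_def pathstart_def pathfinish_def)
  have segment_in_square: "closed_segment a b \<subseteq> ?S" if "a \<in> ?S" "b \<in> ?S" for a b
    using closed_segment_subset[OF that convex_square] .
  have "path_image (linepath (0, 0) (1, 0)) \<subseteq> ?S"
    by (simp add: segment_in_square)
  moreover have "path_image edges \<subseteq> ?S"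
    unfolding edges_def by (intro subset_path_image_join) (simp_all add: segment_in_square)
  ultimately have "homotopic_paths ?S (linepath (0, 0) (1, 0)) edges"
    by (intro homotopic_paths_linear segment_in_square; force simp: edges_def path_image_def)
  moreover have "continuous_on ?S P"
  proof -
    have "continuous_on ?S (\<lambda>z. A (fst z))" "continuous_on ?S (\<lambda>z. \<gamma> (snd z))"
      using A \<gamma>(1) unfolding loop_at_def path_def
      by (auto intro!: continuous_on_compose2[of "{0..1}"] continuous_on_fst continuous_on_snd
          continuous_on_id)
    then show ?thesis
      unfolding P_def by (rule pre_delta_monoid_continuous_on[OF pd convex_square])
  qed
  ultimately have "homotopic_paths UNIV (P \<circ> linepath (0, 0) (1, 0)) (P \<circ> edges)"
    by (rule homotopic_paths_continuous_image) simp
  moreover have "P \<circ> linepath (0, 0) (1, 0) = A"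
    by (simp add: fun_eq_iff P_def linepath_def ends ide)
  moreover have "P \<circ> edges = \<gamma> +++ ((\<lambda>t. prd (A t) x) +++ reversepath \<gamma>)"
  proof -
    have "P \<circ> linepath (0, 0) (0, 1) = \<gamma>" "P \<circ> linepath (0, 1) (1, 1) = (\<lambda>t. prd (A t) x)"
      "P \<circ> linepath (1, 1) (1, 0) = reversepath \<gamma>"
      by (simp_all add: fun_eq_iff P_def linepath_def reversepath_def ends ide)
    then show ?thesis
      by (simp add: edges_def path_compose_join)
  qed
  ultimately show ?thesis
    by simp
qed

lemma homotopic_paths_cancel_mult_right:
  assumes pd: "pre_delta_monoid prd e"
    and A: "loop_at e A" and B: "loop_at e B"
    and \<gamma>: "path \<gamma>" "pathstart \<gamma> = e" "pathfinish \<gamma> = x"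
    and hom: "homotopic_paths UNIV (\<lambda>t. prd (A t) x) (\<lambda>t. prd (B t) x)"
  shows "homotopic_paths UNIV A B"
proof -
  have ends: "A 0 = e" "A 1 = e" "B 0 = e" "B 1 = e" "\<gamma> 0 = e" "\<gamma> 1 = x"
    using A B \<gamma> by (auto simp: loop_at_def pathstart_def pathfinish_def)
  have "prd e x = x"
    using pd by (simp add: pre_delta_monoid_def)
  have "homotopic_paths UNIV A (\<gamma> +++ ((\<lambda>t. prd (A t) x) +++ reversepath \<gamma>))"
    by (rule homotopic_paths_conjugate_mult_right[OF pd A \<gamma>])
  also have "homotopic_paths UNIV \<dots> (\<gamma> +++ ((\<lambda>t. prd (B t) x) +++ reversepath \<gamma>))"
    using \<gamma> hom ends path_mult_right[OF pd] A \<open>prd e x = x\<close> path_reversepath[of \<gamma>]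
    by (intro homotopic_paths_join)
      (auto simp: loop_at_def pathstart_def pathfinish_def joinpaths_def reversepath_def)
  also have "homotopic_paths UNIV \<dots> B"
    using homotopic_paths_conjugate_mult_right[OF pd B \<gamma>] by (simp add: homotopic_paths_sym)
  finally show ?thesis .
qed

lemma null_sequence_mult_right:
  assumes pd: "pre_delta_monoid prd e" and null: "null_sequence e \<alpha>"
  shows "null_sequence x (\<lambda>n t. prd (\<alpha> n t) x)"
proof (rule null_sequence_comp[OF null])
  show "path (\<lambda>t. prd (inf_concat e \<alpha> t) x)"
    using path_mult_right[OF pd] loop_at_inf_concat[OF null] by (simp add: loop_at_def)
  show "path (\<lambda>t. prd (\<alpha> n t) x)" if "n \<ge> 1" for n
    using path_mult_right[OF pd] null that by (simp add: null_sequence_def loop_at_def)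
  show "prd e x = x"
    using pd by (simp add: pre_delta_monoid_def)
qed

theorem mainTheorem13:
  fixes prd :: "'a::topological_space \<Rightarrow> 'a \<Rightarrow> 'a" and e :: 'a
  assumes "pre_delta_monoid prd e"
    and "path_connected (UNIV :: 'a set)"
    and "\<not> wd_inf_pi1_products e"
  shows "\<forall>x::'a. \<not> wd_inf_pi1_products x"
proof (intro allI notI)
  fix x :: 'a assume wd_x: "wd_inf_pi1_products x"
  obtain \<alpha> \<beta> where null: "null_sequence e \<alpha>" "null_sequence e \<beta>"
    and hom: "\<forall>n\<ge>1. homotopic_paths UNIV (\<alpha> n) (\<beta> n)"
    and not_hom: "\<not> homotopic_paths UNIV (inf_concat e \<alpha>) (inf_concat e \<beta>)"
    using assms(3) unfolding wd_inf_pi1_products_def by blast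
  obtain \<gamma> where \<gamma>: "path \<gamma>" "pathstart \<gamma> = e" "pathfinish \<gamma> = x"
    using assms(2) unfolding path_connected_def by blast
  have "prd e x = x"
    using assms(1) by (simp add: pre_delta_monoid_def)
  have "homotopic_paths UNIV (inf_concat x (\<lambda>n t. prd (\<alpha> n t) x)) (inf_concat x (\<lambda>n t. prd (\<beta> n t) x))"
    using wd_x null_sequence_mult_right[OF assms(1) null(1)] null_sequence_mult_right[OF assms(1) null(2)]
      homotopic_paths_mult_right[OF assms(1)] hom
    unfolding wd_inf_pi1_products_def by blast
  then have "homotopic_paths UNIV (\<lambda>t. prd (inf_concat e \<alpha> t) x) (\<lambda>t. prd (inf_concat e \<beta> t) x)"
    by (simp add: inf_concat_comp[of "\<lambda>a. prd a x", OF \<open>prd e x = x\<close>])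
  then have "homotopic_paths UNIV (inf_concat e \<alpha>) (inf_concat e \<beta>)"
    using homotopic_paths_cancel_mult_right[OF assms(1) loop_at_inf_concat[OF null(1)]
        loop_at_inf_concat[OF null(2)] \<gamma>] by blast
  with not_hom show False
    by contradiction
qed

end
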